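(* For $\beta\in\mathcal D$ let $\mathcal C_\beta=\{\alpha\in\mathcal C:\mathrm{supp}\,\alpha\subseteq\mathrm{supp}\,\beta\}$, viewed as a code of length $|\beta|$ on $\mathrm{supp}\,\beta$. Then: (1) if $|\beta|=16$, $\mathcal C_\beta\cong\mathrm{RM}(2,4)$; (2) if $|\beta|=24$, $\mathcal C_\beta\cong\{(\alpha,\gamma,\delta)\in(\mathbb Z_2^8)^3:\alpha,\gamma,\delta\text{ even},\ \alpha+\gamma+\delta\in H_8\}$; (3) if $|\beta|=32$, $\mathcal C_\beta\cong\mathrm{RM}(3,5)$; (4) if $|\beta|=48$, $\mathcal C_\beta=\mathcal C$. Consequently, for $\beta\neq0$, $\mathcal C_\beta$ contains a subcode which is self-dual in $\mathbb Z_2^{\mathrm{supp}\,\beta}$ and isomorphic to a direct sum of $|\beta|/8$ copies of $H_8$.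
   Context: $\mathcal D\subseteq\mathbb Z_2^{48}$ is spanned by $1^{16}0^{32}$, $0^{16}1^{16}0^{16}$, $0^{32}1^{16}$, $(0^81^8)^3$, $(0^41^4)^6$, $(0011)^{12}$, $(0101)^{12}$; its nonzero weights are $16,24,32,48$. $\mathcal C=\mathcal D^\perp$. $\mathrm{RM}(r,m)$ denotes the $r$-th order binary Reed–Muller code of length $2^m$. $H_8$ is the extended Hamming $[8,4,4]$ code spanned by $11111111$, $11110000$, $11001100$, $10101010$ (so $H_8\cong\mathrm{RM}(1,3)$). Isomorphism of codes means equality up to a permutation of coordinates. *)

theory Defs
  imports Main
begin

text \<open>Binary words are represented by their supports: a word of \<open>Z_2^I\<close> is a
  subset of the (finite) coordinate set \<open>I\<close>; addition in \<open>Z_2^I\<close> is symmetric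
  difference, the weight is the cardinality, and the standard inner product of
  two words is the parity of the size of the intersection of their supports.\<close>

definition sdiff :: "nat set \<Rightarrow> nat set \<Rightarrow> nat set" where
  "sdiff a b = (a - b) \<union> (b - a)"

inductive_set z2span :: "nat set set \<Rightarrow> nat set set" for G where
  zero: "{} \<in> z2span G"
| add: "g \<in> G \<Longrightarrow> x \<in> z2span G \<Longrightarrow> sdiff g x \<in> z2span G"

definition dual_code :: "nat set \<Rightarrow> nat set set \<Rightarrow> nat set set" where
  "dual_code I A = {x. x \<subseteq> I \<and> (\<forall>y\<in>A. even (card (x \<inter> y)))}"

definition code_iso :: "nat set \<Rightarrow> nat set set \<Rightarrow> nat set \<Rightarrow> nat set set \<Rightarrow> bool" where
  "code_iso I A J B \<longleftrightarrow> (\<exists>\<pi>. bij_betw \<pi> I J \<and> B = (\<lambda>x. \<pi> ` x) ` A)"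

definition D_gens :: "nat set set" where
  "D_gens = { {0..<16}, {16..<32}, {32..<48},
              {i. i < 48 \<and> (i div 8) mod 2 = 1},
              {i. i < 48 \<and> (i div 4) mod 2 = 1},
              {i. i < 48 \<and> (i div 2) mod 2 = 1},
              {i. i < 48 \<and> i mod 2 = 1} }"

definition D_code :: "nat set set" where
  "D_code = z2span D_gens"

definition C_code :: "nat set set" where
  "C_code = dual_code {..<48} D_code"

definition C_sub :: "nat set \<Rightarrow> nat set set" where
  "C_sub \<beta> = {\<alpha> \<in> C_code. \<alpha> \<subseteq> \<beta>}"

text \<open>Reed--Muller code \<open>RM(r,m)\<close> of length \<open>2^m\<close>: coordinates \<open>p < 2^m\<close> are the
  points of \<open>F_2^m\<close> (the binary digits of \<open>p\<close>); the code is spanned by the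
  evaluation vectors of the monomials \<open>\<Prod>i\<in>S. x_i\<close> with \<open>|S| \<le> r\<close>.\<close>
definition monomial_word :: "nat \<Rightarrow> nat set \<Rightarrow> nat set" where
  "monomial_word m S = {p. p < 2 ^ m \<and> (\<forall>i\<in>S. odd (p div 2 ^ i))}"

definition RM :: "nat \<Rightarrow> nat \<Rightarrow> nat set set" where
  "RM r m = z2span {monomial_word m S | S. S \<subseteq> {..<m} \<and> card S \<le> r}"

definition H8 :: "nat set set" where
  "H8 = z2span { {0..<8}, {0..<4}, {0,1,4,5}, {0,2,4,6} }"

definition blk :: "nat set \<Rightarrow> nat \<Rightarrow> nat set" where
  "blk x j = {i. i < 8 \<and> i + 8 * j \<in> x}"

definition Code24 :: "nat set set" where
  "Code24 = {x. x \<subseteq> {..<24} \<and> even (card (blk x 0)) \<and> even (card (blk x 1))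
               \<and> even (card (blk x 2)) \<and> sdiff (sdiff (blk x 0) (blk x 1)) (blk x 2) \<in> H8}"

definition H8_sum :: "nat \<Rightarrow> nat set set" where
  "H8_sum k = {x. x \<subseteq> {..<8 * k} \<and> (\<forall>j<k. blk x j \<in> H8)}"

end

(*
  For a nonzero word beta of D, C_beta is the dual, inside Z_2^beta, of the restriction of D to
  beta.  Numbering the support of beta increasingly, the restrictions of the seven generators of D
  span the same code as a fixed generating set of the dual of the target code: RM(1,4) for
  |beta| = 16, the parity checks defining Code24 for |beta| = 24, RM(1,5) for |beta| = 32 and D
  itself for |beta| = 48.  Since RM(2,4) and RM(3,5) are the duals of RM(1,4) and RM(1,5), this
  identifies C_beta.  The direct sum of |beta|/8 copies of H_8 is self-dual because H_8 is, and it
  is orthogonal to each of these generating sets, so it lies in the target code; transported to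
  beta it is the required self-dual subcode.

  Words are encoded as natural numbers.  The span equalities for all words of D and the dualities
  of H_8 and of the Reed-Muller codes are decided by Gaussian elimination on bit vectors, and only
  the soundness of these checks is needed.
*)

theory Submission
  imports Defs
begin

section \<open>Binary codes as sets of coordinates\<close>

lemma sdiff_assoc: "sdiff (sdiff a b) c = sdiff a (sdiff b c)"
  by (auto simp: sdiff_def)

lemma sdiff_commute: "sdiff a b = sdiff b a"
  by (auto simp: sdiff_def)

lemma sdiff_empty_left [simp]: "sdiff {} a = a"
  and sdiff_empty_right [simp]: "sdiff a {} = a"
  by (auto simp: sdiff_def)

lemma sdiff_self [simp]: "sdiff a a = {}"
  by (auto simp: sdiff_def)

lemma sdiff_sdiff_telescope: "sdiff (sdiff a b) (sdiff b c) = sdiff a c"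
  by (auto simp: sdiff_def)

lemma sdiff_cancel_left: "sdiff a (sdiff a b) = b"
  by (auto simp: sdiff_def)

lemma Int_sdiff_distrib: "x \<inter> sdiff a b = sdiff (x \<inter> a) (x \<inter> b)"
  by (auto simp: sdiff_def)

lemma sdiff_Int_distrib: "sdiff a b \<inter> x = sdiff (a \<inter> x) (b \<inter> x)"
  by (auto simp: sdiff_def)

lemma sdiff_subset: "a \<subseteq> I \<Longrightarrow> b \<subseteq> I \<Longrightarrow> sdiff a b \<subseteq> I"
  by (auto simp: sdiff_def)

lemma even_card_sdiff_iff:
  assumes "finite A" "finite B"
  shows "even (card (sdiff A B)) \<longleftrightarrow> (even (card A) \<longleftrightarrow> even (card B))"
proof -
  have "sdiff A B = (A \<union> B) - (A \<inter> B)"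
    by (auto simp: sdiff_def)
  moreover have "card (A \<inter> B) \<le> card (A \<union> B)"
    using assms by (intro card_mono) auto
  moreover have "card ((A \<union> B) - (A \<inter> B)) = card (A \<union> B) - card (A \<inter> B)"
    using assms by (intro card_Diff_subset) auto
  ultimately have "card (sdiff A B) + 2 * card (A \<inter> B) = card A + card B"
    using card_Un_Int[OF assms] by simp
  then show ?thesis
    by presburger
qed

lemma z2span_base: "g \<in> G \<Longrightarrow> g \<in> z2span G"
  using z2span.add[OF _ z2span.zero] by fastforce

lemma z2span_sdiff: "x \<in> z2span G \<Longrightarrow> y \<in> z2span G \<Longrightarrow> sdiff x y \<in> z2span G"
  by (induction x rule: z2span.induct) (simp_all add: sdiff_assoc z2span.add)

lemma z2span_least:
  assumes "{} \<in> S" and "\<And>g x. g \<in> G \<Longrightarrow> x \<in> S \<Longrightarrow> sdiff g x \<in> S"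
  shows "z2span G \<subseteq> S"
proof
  show "x \<in> S" if "x \<in> z2span G" for x
    using that by induction (use assms in auto)
qed

lemma z2span_subset_z2span: "G \<subseteq> z2span H \<Longrightarrow> z2span G \<subseteq> z2span H"
  by (rule z2span_least) (auto intro: z2span.zero z2span_sdiff)

lemma z2span_mono: "G \<subseteq> H \<Longrightarrow> z2span G \<subseteq> z2span H"
  by (rule z2span_subset_z2span) (auto intro: z2span_base)

lemma z2span_subset_Pow: "G \<subseteq> Pow I \<Longrightarrow> z2span G \<subseteq> Pow I"
  by (rule z2span_least) (auto simp: sdiff_def)

lemma z2span_insert: "z2span (insert a G) = z2span G \<union> sdiff a ` z2span G"
proof
  have "sdiff g x \<in> z2span G \<union> sdiff a ` z2span G"
    if g: "g \<in> insert a G" and x: "x \<in> z2span G \<union> sdiff a ` z2span G" for g x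
  proof (cases "g = a")
    case True
    with x show ?thesis
      by (auto simp: sdiff_cancel_left)
  next
    case False
    with g have "g \<in> z2span G"
      by (auto intro: z2span_base)
    moreover have "sdiff g (sdiff a y) = sdiff a (sdiff g y)" for y
      by (metis sdiff_assoc sdiff_commute)
    ultimately show ?thesis
      using x by (auto intro: z2span_sdiff)
  qed
  then show "z2span (insert a G) \<subseteq> z2span G \<union> sdiff a ` z2span G"
    by (intro z2span_least) (auto intro: z2span.zero)
next
  have "z2span G \<subseteq> z2span (insert a G)" and "a \<in> z2span (insert a G)"
    by (simp_all add: z2span_mono subset_insertI z2span_base)
  then show "z2span G \<union> sdiff a ` z2span G \<subseteq> z2span (insert a G)"
    by (auto intro: z2span_sdiff)
qed

lemma dual_code_antimono: "G \<subseteq> H \<Longrightarrow> dual_code I H \<subseteq> dual_code I G"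
  by (auto simp: dual_code_def)

lemma dual_code_subset: "dual_code I A \<subseteq> Pow I"
  by (auto simp: dual_code_def)

lemma dual_code_z2span:
  assumes "finite I"
  shows "dual_code I (z2span G) = dual_code I G"
proof
  show "dual_code I (z2span G) \<subseteq> dual_code I G"
    by (rule dual_code_antimono) (auto intro: z2span_base)
next
  show "dual_code I G \<subseteq> dual_code I (z2span G)"
  proof
    fix x assume x: "x \<in> dual_code I G"
    then have "finite x"
      using assms by (auto simp: dual_code_def intro: finite_subset)
    have "even (card (x \<inter> y))" if "y \<in> z2span G" for y
      using that
    proof induction
      case (add g y)
      with x \<open>finite x\<close> show ?case
        by (simp add: dual_code_def Int_sdiff_distrib even_card_sdiff_iff)
    qed simp
    with x show "x \<in> dual_code I (z2span G)"
      by (auto simp: dual_code_def)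
  qed
qed

lemma dual_code_sdiff:
  assumes "finite I" "x \<in> dual_code I H" "y \<in> dual_code I H"
  shows "sdiff x y \<in> dual_code I H"
proof -
  have "finite x" "finite y"
    using assms by (auto simp: dual_code_def intro: finite_subset)
  with assms show ?thesis
    by (auto simp: dual_code_def sdiff_subset sdiff_Int_distrib even_card_sdiff_iff)
qed

lemma z2span_subset_dual_code:
  assumes "finite I" "G \<subseteq> dual_code I H"
  shows "z2span G \<subseteq> dual_code I H"
proof (rule z2span_least)
  show "{} \<in> dual_code I H"
    by (simp add: dual_code_def)
qed (use assms in \<open>auto intro: dual_code_sdiff\<close>)

lemma dual_code_eq_if_z2span_eq:
  assumes "finite I" "z2span G = z2span H"
  shows "dual_code I G = dual_code I H"
  by (metis assms dual_code_z2span)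

lemma dual_code_within_eq_empty:
  assumes "x \<in> dual_code I (z2span H)" "x \<subseteq> P"
    and "\<And>q. q \<in> P \<Longrightarrow> \<exists>t\<in>z2span H. t \<inter> P = {q}"
  shows "x = {}"
proof (rule ccontr)
  assume "x \<noteq> {}"
  then obtain q where "q \<in> x"
    by auto
  with assms obtain t where "t \<in> z2span H" "t \<inter> P = {q}"
    by blast
  with assms(2) \<open>q \<in> x\<close> have "x \<inter> t = {q}"
    by blast
  with assms(1) \<open>t \<in> z2span H\<close> show False
    by (auto simp: dual_code_def)
qed

text \<open>Systematic form: subtracting the words \<open>w\<close> reduces a dual word to one inside \<open>P\<close>,
  and the words \<open>t\<close> show that such a dual word is empty.\<close>

lemma z2span_eq_dual_code:
  assumes fin: "finite I" and G: "G \<subseteq> Pow I"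
    and orth: "\<And>g h. g \<in> G \<Longrightarrow> h \<in> H \<Longrightarrow> even (card (g \<inter> h))"
    and W: "\<And>p. p \<in> I - P \<Longrightarrow> \<exists>w\<in>z2span G. w - P = {p}"
    and T: "\<And>q. q \<in> P \<Longrightarrow> \<exists>t\<in>z2span H. t \<inter> P = {q}"
  shows "z2span G = dual_code I H"
proof
  have span_dual: "z2span G \<subseteq> dual_code I H"
    using G orth by (intro z2span_subset_dual_code[OF fin]) (auto simp: dual_code_def)
  then show "z2span G \<subseteq> dual_code I H" .
  show "dual_code I H \<subseteq> z2span G"
  proof
    fix x assume "x \<in> dual_code I H"
    then show "x \<in> z2span G"
    proof (induction "card (x - P)" arbitrary: x rule: less_induct)
      case less
      have "x \<subseteq> I"
        using less.prems by (simp add: dual_code_def)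
      have x_dual: "x \<in> dual_code I (z2span H)"
        using less.prems by (simp add: dual_code_z2span[OF fin])
      show ?case
      proof (cases "x \<subseteq> P")
        case True
        have "x = {}"
          using x_dual True T by (rule dual_code_within_eq_empty)
        then show ?thesis by (simp add: z2span.zero)
      next
        case False
        then obtain p where p: "p \<in> x" "p \<notin> P" by auto
        with W \<open>x \<subseteq> I\<close> obtain w where w: "w \<in> z2span G" "w - P = {p}" by blast
        define x' where "x' = sdiff x w"
        have "x' \<in> dual_code I H"
          unfolding x'_def using w(1) span_dual by (intro dual_code_sdiff[OF fin less.prems]) auto
        have "x' - P = (x - P) - {p}"
          using w(2) p unfolding x'_def sdiff_def by auto
        moreover have "finite (x - P)"
          using \<open>x \<subseteq> I\<close> fin by (auto intro: finite_subset)
        ultimately have "card (x' - P) < card (x - P)"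
          using card_Diff1_less[of "x - P" p] p by simp
        with \<open>x' \<in> dual_code I H\<close> have "x' \<in> z2span G"
          by (rule less.hyps[rotated])
        with w(1) have "sdiff w x' \<in> z2span G"
          by (rule z2span_sdiff)
        then show ?thesis
          by (simp add: x'_def sdiff_commute[of x w] sdiff_cancel_left)
      qed
    qed
  qed
qed

lemma dual_code_image:
  assumes bij: "bij_betw \<sigma> J B" and A: "A \<subseteq> Pow J"
  shows "image \<sigma> ` dual_code J A = dual_code B (image \<sigma> ` A)"
proof -
  have inj: "inj_on \<sigma> J" and B: "B = \<sigma> ` J"
    using bij by (auto simp: bij_betw_def)
  have card_image_Int: "card (\<sigma> ` x \<inter> \<sigma> ` a) = card (x \<inter> a)" if "x \<subseteq> J" "a \<subseteq> J" for x a
  proof -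
    have "inj_on \<sigma> (x \<inter> a)"
      using that by (blast intro: inj_on_subset[OF inj])
    with that show ?thesis
      by (simp add: inj_on_image_Int[OF inj, symmetric] card_image)
  qed
  have dual_iff: "\<sigma> ` x \<in> dual_code B (image \<sigma> ` A) \<longleftrightarrow> x \<in> dual_code J A" if "x \<subseteq> J" for x
  proof -
    have "card (\<sigma> ` x \<inter> \<sigma> ` a) = card (x \<inter> a)" if "a \<in> A" for a
      using that A \<open>x \<subseteq> J\<close> card_image_Int by auto
    with \<open>x \<subseteq> J\<close> show ?thesis
      by (auto simp: dual_code_def B)
  qed
  show ?thesis
  proof
    show "image \<sigma> ` dual_code J A \<subseteq> dual_code B (image \<sigma> ` A)"
    proof
      fix y assume "y \<in> image \<sigma> ` dual_code J A"
      then obtain x where "x \<in> dual_code J A" "y = \<sigma> ` x"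
        by blast
      with dual_iff show "y \<in> dual_code B (image \<sigma> ` A)"
        by (simp add: dual_code_def[of J A])
    qed
  next
    show "dual_code B (image \<sigma> ` A) \<subseteq> image \<sigma> ` dual_code J A"
    proof
      fix y assume y: "y \<in> dual_code B (image \<sigma> ` A)"
      then have "y \<subseteq> \<sigma> ` J"
        by (simp add: dual_code_def B)
      then obtain x where "x \<subseteq> J" "y = \<sigma> ` x"
        by (meson subset_imageE)
      with y dual_iff show "y \<in> image \<sigma> ` dual_code J A"
        by simp
    qed
  qed
qed

lemma code_iso_image:
  assumes bij: "bij_betw \<sigma> J B" and A: "A \<subseteq> Pow J"
  shows "code_iso B (image \<sigma> ` A) J A"
  unfolding code_iso_def
proof (intro exI conjI)
  show "bij_betw (inv_into J \<sigma>) B J"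
    by (rule bij_betw_inv_into[OF bij])
  have "inv_into J \<sigma> ` \<sigma> ` a = a" if "a \<in> A" for a
    using that A bij by (intro inv_into_image_cancel) (auto simp: bij_betw_def)
  then show "A = (\<lambda>x. inv_into J \<sigma> ` x) ` image \<sigma> ` A"
    by (simp add: image_image)
qed

lemma dual_code_restrict:
  assumes "\<beta> \<subseteq> I"
  shows "{x \<in> dual_code I A. x \<subseteq> \<beta>} = dual_code \<beta> ((\<lambda>a. a \<inter> \<beta>) ` A)"
proof -
  have "x \<inter> (a \<inter> \<beta>) = x \<inter> a" if "x \<subseteq> \<beta>" for x a
    using that by auto
  with assms show ?thesis
    by (auto simp: dual_code_def)
qed

lemma self_dual_code_image:
  assumes bij: "bij_betw \<sigma> J B" and A: "dual_code J A = A" and "A \<subseteq> X"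
  shows "image \<sigma> ` A \<subseteq> image \<sigma> ` X" "image \<sigma> ` A = dual_code B (image \<sigma> ` A)"
    "code_iso B (image \<sigma> ` A) J A"
proof -
  have "A \<subseteq> Pow J"
    using A dual_code_subset by metis
  then show "image \<sigma> ` A = dual_code B (image \<sigma> ` A)" "code_iso B (image \<sigma> ` A) J A"
    using dual_code_image[OF bij, of A] A by (simp_all add: code_iso_image[OF bij])
qed (use assms in auto)

section \<open>Words encoded by natural numbers\<close>

definition bitset :: "nat \<Rightarrow> nat set" where
  "bitset n = {i. bit n i}"

lemma bitset_0 [simp]: "bitset 0 = {}"
  by (simp add: bitset_def)

lemma bitset_xor: "bitset (xor a b) = sdiff (bitset a) (bitset b)"
  by (auto simp: bitset_def sdiff_def bit_xor_iff)

lemma bitset_and: "bitset (and a b) = bitset a \<inter> bitset b"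
  by (auto simp: bitset_def bit_and_iff)

lemma bitset_or: "bitset (or a b) = bitset a \<union> bitset b"
  by (auto simp: bitset_def bit_or_iff)

lemma bitset_pow2: "bitset (2 ^ k) = {k}"
  by (auto simp: bitset_def bit_exp_iff)

lemma bitset_mask: "bitset (2 ^ k - 1) = {..<k}"
proof -
  have "(2::nat) ^ k - 1 = mask k"
    by (simp add: mask_eq_exp_minus_1)
  then show ?thesis
    by (auto simp: bitset_def bit_mask_iff)
qed

lemma bitset_mult_pow2: "bitset (n * 2 ^ k) = (\<lambda>i. i + k) ` bitset n"
proof -
  have "bit (n * 2 ^ k) i \<longleftrightarrow> k \<le> i \<and> bit n (i - k)" for i
    by (simp add: bit_push_bit_iff_nat flip: push_bit_eq_mult)
  then show ?thesis
    by (force simp: bitset_def image_iff)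
qed

lemma bitset_horner_sum: "bitset (horner_sum of_bool 2 bs) = {i. i < length bs \<and> bs ! i}"
  by (simp add: bitset_def bit_horner_sum_bit_iff)

lemma bitset_subset_lessThan:
  assumes "n < 2 ^ k"
  shows "bitset n \<subseteq> {..<k}"
proof
  fix i assume "i \<in> bitset n"
  with assms have "bit (take_bit k n) i"
    by (simp add: bitset_def take_bit_nat_eq_self)
  then show "i \<in> {..<k}"
    by (simp add: bit_take_bit_iff)
qed

lemma finite_bitset [simp]: "finite (bitset n)"
  using bitset_subset_lessThan[of n n] by (auto intro: finite_subset)

lemma bitset_double: "bitset (2 * n) = Suc ` bitset n"
proof (rule set_eqI)
  show "i \<in> bitset (2 * n) \<longleftrightarrow> i \<in> Suc ` bitset n" for i
    by (cases i) (auto simp: bitset_def bit_Suc bit_0)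
qed

lemma bitset_Suc_double: "bitset (Suc (2 * n)) = insert 0 (Suc ` bitset n)"
proof (rule set_eqI)
  show "i \<in> bitset (Suc (2 * n)) \<longleftrightarrow> i \<in> insert 0 (Suc ` bitset n)" for i
    by (cases i) (auto simp: bitset_def bit_Suc bit_0)
qed

lemma bitset_1: "bitset 1 = {0}"
  using bitset_pow2[of 0] by simp

lemma bitset_numeral_Bit0: "bitset (numeral (Num.Bit0 k)) = Suc ` bitset (numeral k)"
  by (subst numeral_Bit0_eq_double) (rule bitset_double)

lemma bitset_numeral_Bit1: "bitset (numeral (Num.Bit1 k)) = insert 0 (Suc ` bitset (numeral k))"
  by (metis bitset_Suc_double numeral_Bit1_eq_inc_double Suc_eq_plus1)

lemma card_bitset_eval:
  "card (bitset 0) = 0" "card (bitset 1) = 1"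
  "card (bitset (numeral (Num.Bit0 k))) = card (bitset (numeral k))"
  "card (bitset (numeral (Num.Bit1 k))) = Suc (card (bitset (numeral k)))"
  by (simp_all only: bitset_1 bitset_0 bitset_numeral_Bit0 bitset_numeral_Bit1)
    (simp_all add: card_image)

fun span_list :: "nat list \<Rightarrow> nat list" where
  "span_list [] = [0]"
| "span_list (g # gs) = span_list gs @ map (xor g) (span_list gs)"

lemma z2span_bitset_span_list: "z2span (bitset ` set gs) = bitset ` set (span_list gs)"
proof (induction gs)
  case Nil
  have "z2span {} \<subseteq> {{}}"
    by (rule z2span_least) auto
  then show ?case
    by (auto intro: z2span.zero)
next
  case (Cons g gs)
  then show ?case
    by (simp add: z2span_insert image_Un image_image bitset_xor)
qed

function positions :: "nat \<Rightarrow> nat list" where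
  "positions n = (if n = 0 then [] else
     if odd n then 0 # map Suc (positions (n div 2)) else map Suc (positions (n div 2)))"
  by auto
termination
  by (relation "measure id") auto

declare positions.simps [simp del]

lemma set_positions: "set (positions n) = bitset n"
proof (induction n rule: positions.induct)
  case (1 n)
  show ?case
  proof (cases "n = 0")
    case False
    then have IH: "set (positions (n div 2)) = bitset (n div 2)"
      using 1 by blast
    show ?thesis
    proof (cases "odd n")
      case True
      then have "bitset n = insert 0 (Suc ` bitset (n div 2))"
        using bitset_Suc_double[of "n div 2"] by simp
      with True False IH show ?thesis
        by (subst positions.simps) simp
    next
      case even: False
      then have "bitset n = Suc ` bitset (n div 2)"
        using bitset_double[of "n div 2"] by simp
      with even False IH show ?thesis
        by (subst positions.simps) simp
    qed
  qed (simp add: positions.simps)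
qed

lemma distinct_positions: "distinct (positions n)"
  by (induction n rule: positions.induct) (subst positions.simps, auto simp: distinct_map)

lemma length_positions: "length (positions n) = card (bitset n)"
  by (metis distinct_card distinct_positions set_positions)

lemma positions_eval:
  "positions (numeral (Num.Bit0 k)) = map Suc (positions (numeral k))"
  "positions (numeral (Num.Bit1 k)) = 0 # map Suc (positions (numeral k))"
  by (subst positions.simps; simp)+

definition compress :: "nat \<Rightarrow> nat \<Rightarrow> nat" where
  "compress m x = horner_sum of_bool 2 (map (bit x) (positions m))"

lemma bitset_compress:
  "bitset (compress m x) = {s. s < card (bitset m) \<and> positions m ! s \<in> bitset x}"
proof -
  have "bitset (compress m x) = {i. i < length (positions m) \<and> map (bit x) (positions m) ! i}"
    by (simp add: compress_def bitset_horner_sum)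
  then show ?thesis
    by (simp add: length_positions bitset_def[of x] cong: conj_cong)
qed

lemma image_nth_positions_compress:
  "(!) (positions m) ` bitset (compress m x) = bitset x \<inter> bitset m"
proof -
  have "(!) ps ` {s. s < length ps \<and> ps ! s \<in> X} = X \<inter> set ps" for ps :: "nat list" and X
    by (auto simp: in_set_conv_nth)
  then show ?thesis
    by (simp add: bitset_compress set_positions flip: length_positions)
qed

lemma compress_eval:
  "compress 0 x = 0" "compress 1 x = of_bool (odd x)"
  "compress (numeral (Num.Bit0 k)) x = compress (numeral k) (x div 2)"
  "compress (numeral (Num.Bit1 k)) x = of_bool (odd x) + 2 * compress (numeral k) (x div 2)"
proof -
  show "compress (numeral (Num.Bit0 k)) x = compress (numeral k) (x div 2)"
    "compress (numeral (Num.Bit1 k)) x = of_bool (odd x) + 2 * compress (numeral k) (x div 2)"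
    by (simp_all add: compress_def positions_eval bit_0 o_def bit_Suc)
  show "compress 0 x = 0" "compress 1 x = of_bool (odd x)"
    by (subst compress_def, subst positions.simps, simp add: positions.simps bit_0)+
qed

section \<open>Checking spans and duals by elimination\<close>

text \<open>\<open>min y (xor y b)\<close> clears the leading bit of \<open>b\<close> in \<open>y\<close> if it is set; along a list
  sorted decreasingly with distinct leading bits this is Gaussian elimination.  Only soundness
  is proved below: whenever a check succeeds its conclusion holds.\<close>

definition reduce :: "nat list \<Rightarrow> nat \<Rightarrow> nat" where
  "reduce bs x = fold (\<lambda>b y. min y (xor y b)) bs x"

lemma reduce_eval:
  "reduce [] x = x"
  "reduce (b # bs) 0 = reduce bs (min 0 (xor 0 b))"
  "reduce (b # bs) 1 = reduce bs (min 1 (xor 1 b))"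
  "reduce (b # bs) (numeral k) = reduce bs (min (numeral k) (xor (numeral k) b))"
  by (simp_all add: reduce_def)

lemma reduce_sdiff_z2span: "sdiff (bitset x) (bitset (reduce bs x)) \<in> z2span (bitset ` set bs)"
proof (induction bs arbitrary: x)
  case Nil
  then show ?case
    by (simp add: reduce_def z2span.zero)
next
  case (Cons b bs)
  let ?S = "z2span (bitset ` set (b # bs))"
  let ?y = "min x (xor x b)"
  have "sdiff (bitset x) (bitset ?y) \<in> ?S"
    by (cases "x \<le> xor x b")
      (simp_all add: min_def bitset_xor sdiff_cancel_left z2span.zero z2span_base)
  moreover have "sdiff (bitset ?y) (bitset (reduce bs ?y)) \<in> ?S"
    using Cons.IH z2span_mono[of "bitset ` set bs" "bitset ` set (b # bs)"] by auto
  ultimately have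
    "sdiff (sdiff (bitset x) (bitset ?y)) (sdiff (bitset ?y) (bitset (reduce bs ?y))) \<in> ?S"
    by (rule z2span_sdiff)
  then show ?case
    by (simp add: reduce_def sdiff_sdiff_telescope)
qed

fun insort_desc :: "nat \<Rightarrow> nat list \<Rightarrow> nat list" where
  "insort_desc x [] = [x]"
| "insort_desc x (y # ys) = (if y < x then x # y # ys else y # insort_desc x ys)"

lemma set_insort_desc [simp]: "set (insort_desc x ys) = insert x (set ys)"
  by (induction ys) auto

fun echelon :: "nat list \<Rightarrow> nat list" where
  "echelon [] = []"
| "echelon (g # gs) = (let E = echelon gs; r = reduce E g in if r = 0 then E else insort_desc r E)"

lemma echelon_z2span: "bitset ` set (echelon gs) \<subseteq> z2span (bitset ` set gs)"
proof (induction gs)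
  case (Cons g gs)
  let ?S = "z2span (bitset ` set (g # gs))"
  let ?E = "echelon gs"
  have "z2span (bitset ` set gs) \<subseteq> ?S"
    by (rule z2span_mono) auto
  with Cons.IH have span_E: "z2span (bitset ` set ?E) \<subseteq> ?S"
    by (meson order_trans z2span_subset_z2span)
  have "bitset g \<in> ?S"
    by (simp add: z2span_base)
  moreover have "sdiff (bitset g) (bitset (reduce ?E g)) \<in> ?S"
    using reduce_sdiff_z2span span_E by blast
  ultimately have "sdiff (bitset g) (sdiff (bitset g) (bitset (reduce ?E g))) \<in> ?S"
    by (rule z2span_sdiff)
  then have "bitset (reduce ?E g) \<in> ?S"
    by (simp add: sdiff_cancel_left)
  then show ?case
    using Cons.IH \<open>z2span (bitset ` set gs) \<subseteq> ?S\<close> by (auto simp: Let_def)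
qed simp

text \<open>Stated as an abstraction so that the echelon form is evaluated once per list.\<close>

definition in_span :: "nat list \<Rightarrow> nat \<Rightarrow> bool" where
  "in_span gs = (\<lambda>x. reduce (echelon gs) x = 0)"

definition same_span :: "nat list \<Rightarrow> nat list \<Rightarrow> bool" where
  "same_span G H \<longleftrightarrow> list_all (in_span H) G \<and> list_all (in_span G) H"

lemma in_span_z2span:
  assumes "in_span gs x"
  shows "bitset x \<in> z2span (bitset ` set gs)"
proof -
  have "bitset x \<in> z2span (bitset ` set (echelon gs))"
    using assms reduce_sdiff_z2span[of x "echelon gs"] by (simp add: in_span_def)
  then show ?thesis
    by (rule subsetD[OF z2span_subset_z2span[OF echelon_z2span]])
qed

function topbit :: "nat \<Rightarrow> nat" where
  "topbit n = (if n \<le> 1 then n else 2 * topbit (n div 2))"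
  by auto
termination
  by (relation "measure id") auto

declare topbit.simps [simp del]

lemma topbit_eval:
  "topbit 0 = 0" "topbit 1 = 1"
  "topbit (numeral (Num.Bit0 k)) = 2 * topbit (numeral k)"
  "topbit (numeral (Num.Bit1 k)) = 2 * topbit (numeral k)"
  by (subst topbit.simps; simp)+

lemma topbit_eq_0_or_pow2: "topbit n = 0 \<or> (\<exists>k. topbit n = 2 ^ k)"
proof (induction n rule: topbit.induct)
  case (1 n)
  show ?case
  proof (cases "n \<le> 1")
    case True
    then have "topbit n = n" and "n = 0 \<or> n = 2 ^ 0"
      by (auto simp: topbit.simps)
    then show ?thesis
      by metis
  next
    case False
    with 1 have "topbit (n div 2) = 0 \<or> (\<exists>k. topbit (n div 2) = 2 ^ k)"
      by blast
    moreover have "topbit n = 2 * topbit (n div 2)"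
      using False by (simp add: topbit.simps)
    ultimately show ?thesis
      by (metis mult_0_right power_Suc)
  qed
qed

lemma bitset_topbit: "q \<in> bitset (topbit n) \<Longrightarrow> bitset (topbit n) = {q}"
  using topbit_eq_0_or_pow2[of n] by (auto simp: bitset_pow2)

definition pivots :: "nat list \<Rightarrow> nat" where
  "pivots T = fold (\<lambda>t. or (topbit t)) T 0"

lemma bitset_pivots: "bitset (pivots T) = (\<Union>t\<in>set T. bitset (topbit t))"
proof -
  have "bitset (fold (\<lambda>t. or (topbit t)) T a) = bitset a \<union> (\<Union>t\<in>set T. bitset (topbit t))" for a
    by (induction T arbitrary: a) (auto simp: bitset_or)
  then show ?thesis
    by (simp add: pivots_def)
qed

definition rref :: "nat list \<Rightarrow> nat list" where
  "rref E = map (\<lambda>b. reduce (remove1 b E) b) E"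

lemma rref_z2span: "bitset ` set (rref E) \<subseteq> z2span (bitset ` set E)"
proof
  fix y assume "y \<in> bitset ` set (rref E)"
  then obtain b where b: "b \<in> set E" and y: "y = bitset (reduce (remove1 b E) b)"
    by (auto simp: rref_def)
  have "z2span (bitset ` set (remove1 b E)) \<subseteq> z2span (bitset ` set E)"
    by (intro z2span_mono image_mono) (rule set_remove1_subset)
  then have "sdiff (bitset b) y \<in> z2span (bitset ` set E)"
    unfolding y using reduce_sdiff_z2span by (rule subsetD)
  moreover have "bitset b \<in> z2span (bitset ` set E)"
    using b by (simp add: z2span_base)
  ultimately have "sdiff (bitset b) (sdiff (bitset b) y) \<in> z2span (bitset ` set E)"
    by (rule z2span_sdiff[rotated])
  then show "y \<in> z2span (bitset ` set E)"
    by (simp add: sdiff_cancel_left)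
qed

fun unit_vectors :: "nat \<Rightarrow> nat list" where
  "unit_vectors 0 = []"
| "unit_vectors (Suc n) = 1 # map ((*) 2) (unit_vectors n)"

lemma set_unit_vectors: "set (unit_vectors n) = (\<lambda>i. 2 ^ i) ` {..<n}"
  by (induction n) (auto simp: lessThan_Suc_eq_insert_0 image_image)

lemma unit_vectors_eval:
  "unit_vectors 1 = [1]"
  "unit_vectors (numeral k) = 1 # map ((*) 2) (unit_vectors (pred_numeral k))"
  by (simp_all add: numeral_eq_Suc)

definition dual_witness :: "nat list \<Rightarrow> nat \<Rightarrow> nat" where
  "dual_witness T u = fold (\<lambda>t w. if and t u = 0 then w else or (topbit t) w) T u"

lemma bitset_dual_witness:
  "bitset u \<subseteq> bitset (dual_witness T u)"
  "bitset (dual_witness T u) \<subseteq> bitset u \<union> (\<Union>t\<in>set T. bitset (topbit t))"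
proof -
  let ?f = "\<lambda>t w. if and t u = 0 then w else or (topbit t) w"
  have "bitset w \<subseteq> bitset (fold ?f T w) \<and>
      bitset (fold ?f T w) \<subseteq> bitset w \<union> (\<Union>t\<in>set T. bitset (topbit t))" for w
  proof (induction T arbitrary: w)
    case (Cons t T)
    have "bitset w \<subseteq> bitset (?f t w)" "bitset (?f t w) \<subseteq> bitset w \<union> bitset (topbit t)"
      by (auto simp: bitset_or)
    with Cons.IH[of "?f t w"] show ?case
      by auto
  qed simp
  then show "bitset u \<subseteq> bitset (dual_witness T u)"
    "bitset (dual_witness T u) \<subseteq> bitset u \<union> (\<Union>t\<in>set T. bitset (topbit t))"
    by (simp_all add: dual_witness_def)
qed

lemma z2span_eq_if_same_span:
  assumes "same_span G H"
  shows "z2span (bitset ` set G) = z2span (bitset ` set H)"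
  using assms in_span_z2span
  by (auto simp: same_span_def list_all_iff intro!: equalityI z2span_subset_z2span)

text \<open>\<open>T\<close> is the reduced echelon form of \<open>H\<close> and \<open>P\<close> its set of pivots.  For a non-pivot
  coordinate \<open>p\<close>, the word consisting of \<open>p\<close> and the pivots of those \<open>t \<in> T\<close> containing \<open>p\<close>
  is orthogonal to \<open>T\<close>, so it is the word of the systematic-form criterion that has to be
  found in the span of \<open>G\<close>.\<close>

definition dual_check :: "nat \<Rightarrow> nat list \<Rightarrow> nat list \<Rightarrow> bool" where
  "dual_check n G H \<longleftrightarrow>
     (let T = rref (echelon H); P = pivots T in
       list_all (\<lambda>g. g < 2 ^ n \<and> list_all (\<lambda>h. even (card (bitset (and g h)))) H) G \<and>
       list_all (\<lambda>t. and t P = topbit t) T \<and>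
       list_all (in_span G) (map (dual_witness T) (filter (\<lambda>u. and u P = 0) (unit_vectors n))))"

lemma z2span_eq_dual_code_if_dual_check:
  assumes "dual_check n G H"
  shows "z2span (bitset ` set G) = dual_code {..<n} (bitset ` set H)"
proof -
  define T where "T = rref (echelon H)"
  define P where "P = pivots T"
  have G: "\<And>g. g \<in> set G \<Longrightarrow> g < 2 ^ n \<and> (\<forall>h\<in>set H. even (card (bitset (and g h))))"
    and T: "\<And>t. t \<in> set T \<Longrightarrow> and t P = topbit t"
    and W: "\<And>u. u \<in> set (unit_vectors n) \<Longrightarrow> and u P = 0 \<Longrightarrow> in_span G (dual_witness T u)"
    using assms by (auto simp: dual_check_def Let_def T_def P_def list_all_iff)
  have "bitset ` set T \<subseteq> z2span (bitset ` set (echelon H))"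
    unfolding T_def by (rule rref_z2span)
  also have "\<dots> \<subseteq> z2span (bitset ` set H)"
    by (rule z2span_subset_z2span[OF echelon_z2span])
  finally have T_span: "bitset ` set T \<subseteq> z2span (bitset ` set H)" .
  show ?thesis
  proof (rule z2span_eq_dual_code[where P = "bitset P"])
    show "bitset ` set G \<subseteq> Pow {..<n}"
      using G bitset_subset_lessThan by auto
    show "even (card (g \<inter> h))" if "g \<in> bitset ` set G" "h \<in> bitset ` set H" for g h
      using that G by (auto simp flip: bitset_and)
  next
    fix p assume p: "p \<in> {..<n} - bitset P"
    then have "2 ^ p \<in> set (unit_vectors n)" and "and (2 ^ p) P = 0"
      by (auto simp: set_unit_vectors bitset_def bit_and_iff bit_exp_iff intro!: bit_eqI)
    then have "in_span G (dual_witness T (2 ^ p))"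
      by (rule W)
    moreover have "bitset (dual_witness T (2 ^ p)) - bitset P = {p}"
      using bitset_dual_witness[where u = "2 ^ p" and T = T] p
      by (auto simp: bitset_pow2 bitset_pivots P_def)
    ultimately show "\<exists>w\<in>z2span (bitset ` set G). w - bitset P = {p}"
      using in_span_z2span by auto
  next
    fix q assume "q \<in> bitset P"
    then obtain t where t: "t \<in> set T" "q \<in> bitset (topbit t)"
      by (auto simp: P_def bitset_pivots)
    then have "bitset t \<inter> bitset P = {q}"
      using T[OF t(1)] bitset_topbit[OF t(2)] by (simp flip: bitset_and)
    moreover have "bitset t \<in> z2span (bitset ` set H)"
      using t(1) T_span by auto
    ultimately show "\<exists>t\<in>z2span (bitset ` set H). t \<inter> bitset P = {q}"
      by auto
  qed simp
qed

text \<open>The computations below are closed terms over literals; they are evaluated by \<open>simp only\<close>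
  with these rules and \<open>cong: if_weak_cong\<close>, the default simpset being far too slow on them.
  The equations for \<open>reduce\<close>, \<open>compress\<close> etc. only match literals, so nothing is expanded
  under a binder before its variable is instantiated.\<close>

lemma nat_bits_eval_basic:
  "2 * numeral k = (numeral (Num.Bit0 k) :: nat)"
  "1 + numeral (Num.Bit0 k) = (numeral (Num.Bit1 k) :: nat)"
  "2 * (0::nat) = 0" "2 * (1::nat) = 2" "1 + (0::nat) = 1" "0 + (x::nat) = x"
  "of_bool True = (1::nat)" "of_bool False = (0::nat)"
  "\<not> even (numeral (Num.Bit1 k) :: nat)" "even (numeral (Num.Bit0 k) :: nat)"
  "\<not> even (1::nat)" "even (0::nat)"
  "numeral (Num.Bit0 k) div 2 = (numeral k :: nat)"
  "numeral (Num.Bit1 k) div 2 = (numeral k :: nat)"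
  "(1::nat) div 2 = 0" "(0::nat) div 2 = 0"
  "Suc 0 = 1" "Suc 1 = 2" "Suc (numeral k) = numeral (Num.inc k)"
  "min (0::nat) x = 0" "min x (0::nat) = 0" "min (1::nat) 1 = 1"
  "min (1::nat) (numeral k) = 1" "min (numeral k) (1::nat) = 1"
  "min (numeral k) (numeral l :: nat) = (if k \<le> l then numeral k else numeral l)"
  "(0::nat) \<le> x" "\<not> (x::nat) < 0"
  "xor 0 x = (x::nat)" "xor x 0 = (x::nat)" "xor (1::nat) 1 = 0"
  "and 0 x = (0::nat)" "and x 0 = (0::nat)" "and (1::nat) 1 = 1"
  "or 0 x = (x::nat)" "or x 0 = (x::nat)" "or (1::nat) 1 = 1"
  "\<not> bit (0::nat) i" "bit (1::nat) 0" "\<not> bit (1::nat) 1" "\<not> bit (1::nat) (numeral k)"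
  "\<not> bit (numeral (Num.Bit0 w) :: nat) 0" "bit (numeral (Num.Bit1 w) :: nat) 0"
  "bit (numeral (Num.Bit0 w) :: nat) 1 \<longleftrightarrow> bit (numeral w :: nat) 0"
  "bit (numeral (Num.Bit1 w) :: nat) 1 \<longleftrightarrow> bit (numeral w :: nat) 0"
  "bit (numeral (Num.Bit0 w) :: nat) (numeral l) \<longleftrightarrow> bit (numeral w :: nat) (pred_numeral l)"
  "bit (numeral (Num.Bit1 w) :: nat) (numeral l) \<longleftrightarrow> bit (numeral w :: nat) (pred_numeral l)"
  "(\<forall>x\<in>{}. P x) \<longleftrightarrow> True" "(\<forall>x\<in>insert a A. P x) \<longleftrightarrow> P a \<and> (\<forall>x\<in>A. P x)"
  by (simp_all add: numeral_inc min_def bit_0 bit_1_iff)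

lemmas nat_bits_eval = numeral_One nat_bits_eval_basic inc.simps
  le_numeral_simps less_numeral_simps le_numeral_extra less_numeral_extra
  le_num_simps less_num_simps
  numeral_eq_iff num.inject num.distinct numeral_eq_one_iff one_eq_numeral_iff
  numeral_neq_zero zero_neq_numeral zero_neq_one one_neq_zero
  and_numerals or_numerals xor_numerals
  power_numeral pow.simps sqr.simps mult_num_simps add_num_simps pred_numeral_simps BitM.simps
  list.map list.pred_inject append.simps fold_simps remove1.simps filter.simps concat.simps
  list.size(3) length_Cons subseqs.simps list.set upt_rec o_def horner_sum_simps
  power_0 power_one_right
  numeral_times_numeral mult_1 mult_1_right mult_zero_left mult_zero_right
  if_True if_False simp_thms Let_def
  card_bitset_eval compress_eval topbit_eval unit_vectors_eval reduce_eval
  insort_desc.simps echelon.simps span_list.simps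
  in_span_def pivots_def rref_def dual_witness_def dual_check_def

lemma bitset_eq_Collect:
  assumes "n < 2 ^ k" and "list_all (\<lambda>i. bit n i \<longleftrightarrow> P i) [0..<k]"
  shows "bitset n = {i. i < k \<and> P i}"
  using assms bitset_subset_lessThan[OF assms(1)] by (auto simp: list_all_iff bitset_def)

section \<open>The codes \<open>H_8\<close>, \<open>H_8^k\<close>, \<open>Code24\<close> and \<open>RM(r,m)\<close>\<close>

definition H8_nums :: "nat list" where
  "H8_nums = [255, 15, 51, 85]"

lemma H8_eq_z2span: "H8 = z2span (bitset ` set H8_nums)"
proof -
  have "bitset 255 = {0..<8}" "bitset 15 = {0..<4}"
    using bitset_mask[of 8] bitset_mask[of 4] by (simp_all add: atLeast0LessThan)
  moreover have "bitset 51 = {0, 1, 4, 5}" "bitset 85 = {0, 2, 4, 6}"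
    by (simp_all only: bitset_numeral_Bit0 bitset_numeral_Bit1 bitset_1 image_insert image_empty
        nat_bits_eval)
  ultimately show ?thesis
    by (simp add: H8_def H8_nums_def)
qed

lemma H8_eq_dual_code: "H8 = dual_code {..<8} (bitset ` set H8_nums)"
proof -
  have "dual_check 8 H8_nums H8_nums"
    by (simp only: H8_nums_def nat_bits_eval cong: if_weak_cong)
  then show ?thesis
    unfolding H8_eq_z2span by (rule z2span_eq_dual_code_if_dual_check)
qed

lemma dual_code_H8: "dual_code {..<8} H8 = H8"
proof -
  have "dual_code {..<8} H8 = dual_code {..<8} (bitset ` set H8_nums)"
    by (simp add: H8_eq_z2span dual_code_z2span)
  with H8_eq_dual_code show ?thesis
    by simp
qed

lemma H8_subset_Pow: "H8 \<subseteq> Pow {..<8}"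
  by (metis dual_code_H8 dual_code_subset)

lemma blk_subset: "blk x j \<subseteq> {..<8}"
  by (auto simp: blk_def)

lemma finite_blk [simp]: "finite (blk x j)"
  using blk_subset by (rule finite_subset) simp

lemma blk_shift:
  assumes "h \<subseteq> {..<8}"
  shows "blk ((\<lambda>i. i + 8 * j) ` h) j' = (if j' = j then h else {})"
proof -
  have "i + 8 * j' = i' + 8 * j \<longleftrightarrow> i = i' \<and> j' = j" if "i < 8" "i' < 8" for i i' :: nat
    using that by presburger
  with assms show ?thesis
    by (auto simp: blk_def image_iff)
qed

lemma card_blk_Int:
  assumes "h \<subseteq> {..<8}"
  shows "card (blk x j \<inter> h) = card (x \<inter> (\<lambda>i. i + 8 * j) ` h)"
proof -
  have "x \<inter> (\<lambda>i. i + 8 * j) ` h = (\<lambda>i. i + 8 * j) ` (blk x j \<inter> h)"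
    using assms by (auto simp: blk_def)
  then show ?thesis
    by (simp add: card_image inj_on_def)
qed

lemma card_Int_eq_sum_blk:
  assumes "x \<subseteq> {..<8 * k}"
  shows "card (x \<inter> y) = (\<Sum>j<k. card (blk x j \<inter> blk y j))"
proof -
  have "card (x \<inter> y) = card (\<Union>j<k. (\<lambda>i. i + 8 * j) ` (blk x j \<inter> blk y j))"
  proof (rule arg_cong[where f = card])
    show "x \<inter> y = (\<Union>j<k. (\<lambda>i. i + 8 * j) ` (blk x j \<inter> blk y j))"
    proof
      show "x \<inter> y \<subseteq> (\<Union>j<k. (\<lambda>i. i + 8 * j) ` (blk x j \<inter> blk y j))"
      proof
        fix i assume i: "i \<in> x \<inter> y"
        with assms have "i div 8 < k"
          by (auto simp: less_mult_imp_div_less)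
        moreover have "i mod 8 \<in> blk x (i div 8) \<inter> blk y (i div 8)"
          using i by (simp add: blk_def)
        then have "i \<in> (\<lambda>n. n + 8 * (i div 8)) ` (blk x (i div 8) \<inter> blk y (i div 8))"
          by (rule rev_image_eqI) simp
        ultimately show "i \<in> (\<Union>j<k. (\<lambda>i. i + 8 * j) ` (blk x j \<inter> blk y j))"
          by blast
      qed
    qed (auto simp: blk_def)
  qed
  also have "\<dots> = (\<Sum>j<k. card ((\<lambda>i. i + 8 * j) ` (blk x j \<inter> blk y j)))"
  proof (rule card_UN_disjoint)
    show "\<forall>j\<in>{..<k}. finite ((\<lambda>i. i + 8 * j) ` (blk x j \<inter> blk y j))"
      by simp
    show "\<forall>j\<in>{..<k}. \<forall>j'\<in>{..<k}. j \<noteq> j' \<longrightarrow>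
        (\<lambda>i. i + 8 * j) ` (blk x j \<inter> blk y j) \<inter> (\<lambda>i. i + 8 * j') ` (blk x j' \<inter> blk y j') = {}"
      by (auto simp: blk_def)
  qed simp
  also have "\<dots> = (\<Sum>j<k. card (blk x j \<inter> blk y j))"
    by (simp add: card_image inj_on_def)
  finally show ?thesis .
qed

lemma shift_in_H8_sum:
  assumes "h \<in> H8" "j < k"
  shows "(\<lambda>i. i + 8 * j) ` h \<in> H8_sum k"
proof -
  have "h \<subseteq> {..<8}"
    using assms(1) H8_subset_Pow by blast
  moreover have "{} \<in> H8"
    by (simp add: H8_def z2span.zero)
  ultimately show ?thesis
    using assms by (auto simp: H8_sum_def blk_shift)
qed

lemma dual_code_H8_sum: "dual_code {..<8 * k} (H8_sum k) = H8_sum k"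
proof
  show "dual_code {..<8 * k} (H8_sum k) \<subseteq> H8_sum k"
  proof
    fix x assume x: "x \<in> dual_code {..<8 * k} (H8_sum k)"
    have "blk x j \<in> H8" if "j < k" for j
    proof -
      have "even (card (blk x j \<inter> h))" if "h \<in> H8" for h
        using x \<open>j < k\<close> that H8_subset_Pow shift_in_H8_sum
        by (auto simp: dual_code_def card_blk_Int)
      then have "blk x j \<in> dual_code {..<8} H8"
        by (simp add: dual_code_def blk_subset)
      then show ?thesis
        by (simp add: dual_code_H8)
    qed
    with x show "x \<in> H8_sum k"
      by (simp add: H8_sum_def dual_code_def)
  qed
next
  show "H8_sum k \<subseteq> dual_code {..<8 * k} (H8_sum k)"
  proof
    fix x assume x: "x \<in> H8_sum k"
    have "even (card (x \<inter> y))" if y: "y \<in> H8_sum k" for y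
    proof -
      have even_blk: "even (card (blk x j \<inter> blk y j))" if "j \<in> {..<k}" for j
      proof -
        have "blk x j \<in> dual_code {..<8} H8" "blk y j \<in> H8"
          using x y that by (simp_all add: H8_sum_def dual_code_H8)
        then show ?thesis
          by (simp add: dual_code_def)
      qed
      have "x \<subseteq> {..<8 * k}"
        using x by (simp add: H8_sum_def)
      then show ?thesis
        by (simp only: card_Int_eq_sum_blk) (rule dvd_sum[OF even_blk])
    qed
    with x show "x \<in> dual_code {..<8 * k} (H8_sum k)"
      by (simp add: dual_code_def H8_sum_def)
  qed
qed

definition block_nums :: "nat \<Rightarrow> nat list" where
  "block_nums k = concat (map (\<lambda>j. map (\<lambda>h. h * 2 ^ (8 * j)) H8_nums) [0..<k])"

lemma z2span_block_nums_subset: "z2span (bitset ` set (block_nums k)) \<subseteq> H8_sum k"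
proof -
  have "bitset ` set (block_nums k) \<subseteq> H8_sum k"
  proof
    fix y assume "y \<in> bitset ` set (block_nums k)"
    then obtain h j where "h \<in> set H8_nums" "j < k" "y = (\<lambda>i. i + 8 * j) ` bitset h"
      by (auto simp: block_nums_def bitset_mult_pow2)
    moreover have "bitset h \<in> H8" if "h \<in> set H8_nums" for h
      using that by (simp add: H8_eq_z2span z2span_base)
    ultimately show "y \<in> H8_sum k"
      by (simp add: shift_in_H8_sum)
  qed
  then show ?thesis
    by (metis z2span_subset_dual_code finite_lessThan dual_code_H8_sum)
qed

lemma card_Int_three_copies:
  assumes "x \<subseteq> {..<24}" "h \<subseteq> {..<8}"
  shows "card (x \<inter> (h \<union> (\<lambda>i. i + 8) ` h \<union> (\<lambda>i. i + 16) ` h)) =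
    card (blk x 0 \<inter> h) + card (blk x 1 \<inter> h) + card (blk x 2 \<inter> h)"
proof -
  let ?y = "h \<union> (\<lambda>i. i + 8) ` h \<union> (\<lambda>i. i + 16) ` h"
  have "blk ?y j = h" if "j < 3" for j
  proof -
    from that have "j = 0 \<or> j = 1 \<or> j = 2"
      by auto
    with assms(2) show ?thesis
      by (auto simp: blk_def)
  qed
  then show ?thesis
    using card_Int_eq_sum_blk[of x 3 ?y] assms(1)
    by (simp add: numeral_3_eq_3 numeral_2_eq_2 lessThan_Suc)
qed

definition code24_nums :: "nat list" where
  "code24_nums = map (\<lambda>j. 255 * 2 ^ (8 * j)) [0..<3] @
     map (\<lambda>h. or h (or (h * 2 ^ 8) (h * 2 ^ 16))) H8_nums"

lemma Code24_eq_dual_code: "Code24 = dual_code {..<24} (bitset ` set code24_nums)"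
proof (rule set_eqI)
  fix x
  show "x \<in> Code24 \<longleftrightarrow> x \<in> dual_code {..<24} (bitset ` set code24_nums)"
  proof (cases "x \<subseteq> {..<24}")
    case False
    then show ?thesis
      by (simp add: Code24_def dual_code_def)
  next
    case True
    have block_parity: "even (card (blk x j)) \<longleftrightarrow> even (card (x \<inter> bitset (255 * 2 ^ (8 * j))))"
      for j
      using card_blk_Int[of "{..<8}" x j] blk_subset[of x j] bitset_mask[of 8]
      by (simp add: bitset_mult_pow2 Int_absorb2)
    define s where "s = sdiff (sdiff (blk x 0) (blk x 1)) (blk x 2)"
    have sum_parity: "even (card (s \<inter> bitset h)) \<longleftrightarrow>
        even (card (x \<inter> bitset (or h (or (h * 2 ^ 8) (h * 2 ^ 16)))))"
      if "h \<in> set H8_nums" for h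
    proof -
      have "bitset h \<in> H8"
        using that by (simp add: H8_eq_z2span z2span_base)
      with H8_subset_Pow have "bitset h \<subseteq> {..<8}"
        by blast
      moreover have "bitset (or h (or (h * 2 ^ 8) (h * 2 ^ 16))) =
          bitset h \<union> (\<lambda>i. i + 8) ` bitset h \<union> (\<lambda>i. i + 16) ` bitset h"
        unfolding bitset_or bitset_mult_pow2 by (simp add: Un_assoc)
      moreover have "s \<inter> bitset h =
          sdiff (sdiff (blk x 0 \<inter> bitset h) (blk x 1 \<inter> bitset h)) (blk x 2 \<inter> bitset h)"
        by (simp add: s_def sdiff_Int_distrib)
      moreover have "finite (sdiff (blk x 0 \<inter> bitset h) (blk x 1 \<inter> bitset h))"
        by (simp add: sdiff_def)
      ultimately show ?thesis
        using card_Int_three_copies[OF True] by (simp add: even_card_sdiff_iff)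
    qed
    have "s \<subseteq> {..<8}"
      by (simp add: s_def sdiff_subset blk_subset)
    then have "s \<in> H8 \<longleftrightarrow>
        (\<forall>h\<in>set H8_nums. even (card (x \<inter> bitset (or h (or (h * 2 ^ 8) (h * 2 ^ 16))))))"
      using sum_parity by (auto simp: H8_eq_dual_code dual_code_def)
    with True block_parity[of 0] block_parity[of 1] block_parity[of 2] show ?thesis
      by (simp add: Code24_def dual_code_def code24_nums_def s_def upt_rec)
  qed
qed

definition monomial_num :: "nat \<Rightarrow> nat set \<Rightarrow> nat" where
  "monomial_num m S = horner_sum of_bool 2 (map (\<lambda>p. \<forall>i\<in>S. bit p i) [0..<2 ^ m])"

lemma bitset_monomial_num: "bitset (monomial_num m S) = monomial_word m S"
  by (auto simp: monomial_num_def bitset_horner_sum monomial_word_def bit_iff_odd)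

definition rm_nums :: "nat \<Rightarrow> nat \<Rightarrow> nat list" where
  "rm_nums r m = map (monomial_num m \<circ> set) (filter (\<lambda>l. length l \<le> r) (subseqs [0..<m]))"

lemma RM_eq_z2span: "RM r m = z2span (bitset ` set (rm_nums r m))"
proof -
  let ?L = "{l \<in> set (subseqs [0..<m]). length l \<le> r}"
  have length_eq: "length l = card (set l)" if "l \<in> set (subseqs [0..<m])" for l
    using subseqs_distinctD[OF that] by (simp add: distinct_card)
  have subsets: "{S. S \<subseteq> {..<m} \<and> card S \<le> r} = set ` ?L"
  proof
    show "{S. S \<subseteq> {..<m} \<and> card S \<le> r} \<subseteq> set ` ?L"
    proof
      fix S assume S: "S \<in> {S. S \<subseteq> {..<m} \<and> card S \<le> r}"
      then obtain l where "l \<in> set (subseqs [0..<m])" "S = set l"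
        using subset_subseqs[of S "[0..<m]"] by (auto simp: lessThan_atLeast0)
      with S length_eq show "S \<in> set ` ?L"
        by auto
    qed
    show "set ` ?L \<subseteq> {S. S \<subseteq> {..<m} \<and> card S \<le> r}"
      using subseqs_powset[of "[0..<m]"] length_eq by (auto simp: lessThan_atLeast0)
  qed
  have "{monomial_word m S | S. S \<subseteq> {..<m} \<and> card S \<le> r} =
      monomial_word m ` {S. S \<subseteq> {..<m} \<and> card S \<le> r}"
    by blast
  also have "\<dots> = bitset ` set (rm_nums r m)"
    by (simp add: subsets rm_nums_def bitset_monomial_num image_image)
  finally show ?thesis
    by (simp add: RM_def)
qed

lemma RM_2_4_eq_dual_code: "RM 2 4 = dual_code {..<16} (RM 1 4)"
proof -
  have "dual_check 16 (rm_nums 2 4) (rm_nums 1 4)"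
    by (simp only: rm_nums_def monomial_num_def nat_bits_eval cong: if_weak_cong)
  then show ?thesis
    by (simp add: RM_eq_z2span dual_code_z2span z2span_eq_dual_code_if_dual_check)
qed

lemma RM_3_5_eq_dual_code: "RM 3 5 = dual_code {..<32} (RM 1 5)"
proof -
  have "dual_check 32 (rm_nums 3 5) (rm_nums 1 5)"
    by (simp only: rm_nums_def monomial_num_def nat_bits_eval cong: if_weak_cong)
  then show ?thesis
    by (simp add: RM_eq_z2span dual_code_z2span z2span_eq_dual_code_if_dual_check)
qed

section \<open>The subcodes \<open>C_\<beta>\<close>\<close>

definition D_nums :: "nat list" where
  "D_nums = [65535, 4294901760, 281470681743360,
    280379743338240, 264917625139440, 225179981368524, 187649984473770]"

lemma D_gens_eq: "D_gens = bitset ` set D_nums"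
proof -
  have block: "bitset (65535 * 2 ^ k) = {k..<16 + k}" for k
    using bitset_mask[of 16] by (simp add: bitset_mult_pow2 lessThan_atLeast0)
  have "bitset 65535 = {0..<16}" "bitset 4294901760 = {16..<32}"
    "bitset 281470681743360 = {32..<48}"
    using block[of 0] block[of 16] block[of 32] by simp_all
  moreover have bit_div: "(i div 2 ^ k) mod 2 = 1 \<longleftrightarrow> bit i k" for i k :: nat
    by (simp add: bit_iff_odd odd_iff_mod_2_eq_one)
  have bit_0_mod: "i mod 2 = 1 \<longleftrightarrow> bit i 0" for i :: nat
    by (simp add: bit_0 odd_iff_mod_2_eq_one)
  have "bitset 280379743338240 = {i. i < 48 \<and> (i div 8) mod 2 = 1}"
    "bitset 264917625139440 = {i. i < 48 \<and> (i div 4) mod 2 = 1}"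
    "bitset 225179981368524 = {i. i < 48 \<and> (i div 2) mod 2 = 1}"
    "bitset 187649984473770 = {i. i < 48 \<and> i mod 2 = 1}"
    using bit_div[of _ 3] bit_div[of _ 2] bit_div[of _ 1] bit_0_mod
    by (intro bitset_eq_Collect; simp_all only: nat_bits_eval cong: if_weak_cong)+
  ultimately show ?thesis
    unfolding D_gens_def D_nums_def by (simp only: list.set image_insert image_empty)
qed

lemma D_code_eq: "D_code = bitset ` set (span_list D_nums)"
  by (simp add: D_code_def D_gens_eq z2span_bitset_span_list)

lemma D_code_subset: "D_code \<subseteq> Pow {..<48}"
  unfolding D_code_def by (rule z2span_subset_Pow) (auto simp: D_gens_def)

lemma C_sub_eq:
  assumes "\<beta> \<subseteq> {..<48}"
  shows "C_sub \<beta> = dual_code \<beta> ((\<lambda>d. d \<inter> \<beta>) ` D_gens)"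
  using dual_code_restrict[OF assms, of D_gens]
  by (simp add: C_sub_def C_code_def D_code_def dual_code_z2span)

text \<open>Generators of the duals of the four target codes: \<open>RM(1,4)\<close>, the parity checks of
  \<open>Code24\<close>, \<open>RM(1,5)\<close> and \<open>D\<close>.\<close>

definition target_nums :: "nat \<Rightarrow> nat list" where
  "target_nums m =
     (if m = 16 then rm_nums 1 4 else if m = 24 then code24_nums else if m = 32 then rm_nums 1 5
      else D_nums)"

abbreviation target_code :: "nat \<Rightarrow> nat set set" where
  "target_code m \<equiv> dual_code {..<m} (bitset ` set (target_nums m))"

lemma RM_2_4_eq_target_code: "RM 2 4 = target_code 16"
  unfolding RM_2_4_eq_dual_code RM_eq_z2span[of 1 4] dual_code_z2span[OF finite_lessThan]
  by (simp add: target_nums_def)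

lemma RM_3_5_eq_target_code: "RM 3 5 = target_code 32"
  unfolding RM_3_5_eq_dual_code RM_eq_z2span[of 1 5] dual_code_z2span[OF finite_lessThan]
  by (simp add: target_nums_def)

lemma Code24_eq_target_code: "Code24 = target_code 24"
  by (simp add: Code24_eq_dual_code target_nums_def)

lemma H8_sum_subset_target_code:
  assumes "m = 16 \<or> m = 24 \<or> m = 32 \<or> m = 48"
  shows "H8_sum (m div 8) \<subseteq> target_code m"
proof -
  have div_8:
    "(16::nat) div 8 = 2" "(24::nat) div 8 = 3" "(32::nat) div 8 = 4" "(48::nat) div 8 = 6"
    by simp_all
  have "list_all (in_span (block_nums (m div 8))) (target_nums m)"
    using assms
    by (elim disjE; simp only: div_8 target_nums_def rm_nums_def monomial_num_def code24_nums_def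
        block_nums_def H8_nums_def D_nums_def nat_bits_eval cong: if_weak_cong)
  then have "bitset ` set (target_nums m) \<subseteq> H8_sum (m div 8)"
    using in_span_z2span z2span_block_nums_subset by (fastforce simp: list_all_iff)
  then have "dual_code {..<m} (H8_sum (m div 8)) \<subseteq> target_code m"
    by (rule dual_code_antimono)
  moreover have "m = 8 * (m div 8)"
    using assms by auto
  ultimately show ?thesis
    by (metis dual_code_H8_sum)
qed

text \<open>The list \<open>B\<close> of words and the target generators \<open>T\<close> are parameters so that they are
  evaluated once, not once per word.\<close>

definition support_check :: "nat list \<Rightarrow> nat \<Rightarrow> nat list \<Rightarrow> bool" where
  "support_check B m T \<longleftrightarrow>
     list_all (\<lambda>b. if card (bitset b) = m then same_span (map (compress b) D_nums) T else True) B"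

lemma card_bitset_span_list:
  "list_all (\<lambda>b. card (bitset b) \<in> {0, 16, 24, 32, 48}) (span_list D_nums)"
  by (simp only: D_nums_def nat_bits_eval insert_iff empty_iff cong: if_weak_cong)

lemma support_check_span_list:
  "list_all (\<lambda>m. support_check (span_list D_nums) m (target_nums m)) [16, 24, 32, 48]"
  by (simp only: support_check_def same_span_def target_nums_def rm_nums_def monomial_num_def
      code24_nums_def H8_nums_def D_nums_def nat_bits_eval cong: if_weak_cong)

lemma bij_betw_nth_positions: "bij_betw ((!) (positions b)) {..<card (bitset b)} (bitset b)"
  using bij_betw_nth[OF distinct_positions]
  by (simp add: length_positions set_positions lessThan_atLeast0)

lemma C_sub_bitset:
  assumes "bitset b \<subseteq> {..<48}"
  shows "C_sub (bitset b) =
    image ((!) (positions b)) `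
      dual_code {..<card (bitset b)} (bitset ` set (map (compress b) D_nums))"
proof -
  let ?\<sigma> = "(!) (positions b)"
  note bij = bij_betw_nth_positions[of b]
  have "C_sub (bitset b) = dual_code (bitset b) ((\<lambda>d. d \<inter> bitset b) ` bitset ` set D_nums)"
    using assms by (simp add: C_sub_eq D_gens_eq)
  also have "(\<lambda>d. d \<inter> bitset b) ` bitset ` set D_nums =
      image ?\<sigma> ` bitset ` set (map (compress b) D_nums)"
    by (simp add: image_image image_nth_positions_compress)
  also have "dual_code (bitset b) \<dots> =
      image ?\<sigma> ` dual_code {..<card (bitset b)} (bitset ` set (map (compress b) D_nums))"
    by (rule dual_code_image[OF bij, symmetric]) (auto simp: bitset_compress)
  finally show ?thesis .
qed

lemma C_sub_structure:
  assumes "\<beta> \<in> D_code" "\<beta> \<noteq> {}"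
  obtains \<sigma> where "bij_betw \<sigma> {..<card \<beta>} \<beta>"
    and "card \<beta> = 16 \<or> card \<beta> = 24 \<or> card \<beta> = 32 \<or> card \<beta> = 48"
    and "C_sub \<beta> = image \<sigma> ` target_code (card \<beta>)"
proof -
  from assms(1) obtain b where b: "b \<in> set (span_list D_nums)" and \<beta>: "\<beta> = bitset b"
    unfolding D_code_eq by blast
  have "bitset b \<subseteq> {..<48}"
    using assms(1) D_code_subset \<beta> by blast
  have "card \<beta> \<in> {0, 16, 24, 32, 48}"
    using card_bitset_span_list b by (simp add: \<beta> list_all_iff)
  moreover have "card \<beta> \<noteq> 0"
    using assms(2) by (simp add: \<beta>)
  ultimately have m: "card \<beta> \<in> set [16, 24, 32, 48]"
    by simp
  then have "support_check (span_list D_nums) (card \<beta>) (target_nums (card \<beta>))"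
    using support_check_span_list by (simp only: list_all_iff)
  then have "same_span (map (compress b) D_nums) (target_nums (card \<beta>))"
    using b by (simp add: support_check_def list_all_iff \<beta>)
  then have "dual_code {..<card \<beta>} (bitset ` set (map (compress b) D_nums)) = target_code (card \<beta>)"
    by (intro dual_code_eq_if_z2span_eq z2span_eq_if_same_span) simp
  then have "C_sub \<beta> = image ((!) (positions b)) ` target_code (card \<beta>)"
    using C_sub_bitset[OF \<open>bitset b \<subseteq> {..<48}\<close>] by (simp add: \<beta>)
  with m show thesis
    using that bij_betw_nth_positions[of b] \<beta> by simp
qed

lemma C_sub_iso_target_code:
  assumes "\<beta> \<in> D_code" "\<beta> \<noteq> {}"
  shows "code_iso \<beta> (C_sub \<beta>) {..<card \<beta>} (target_code (card \<beta>))"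
proof -
  obtain \<sigma> where "bij_betw \<sigma> {..<card \<beta>} \<beta>" "C_sub \<beta> = image \<sigma> ` target_code (card \<beta>)"
    using C_sub_structure[OF assms] by metis
  with dual_code_subset show ?thesis
    by (simp add: code_iso_image)
qed

lemma C_sub_self_dual_subcode:
  assumes "\<beta> \<in> D_code" "\<beta> \<noteq> {}"
  shows "\<exists>S. S \<subseteq> C_sub \<beta> \<and> S = dual_code \<beta> S \<and>
    code_iso \<beta> S {..<card \<beta>} (H8_sum (card \<beta> div 8))"
proof -
  obtain \<sigma> where \<sigma>: "bij_betw \<sigma> {..<card \<beta>} \<beta>"
    and m: "card \<beta> = 16 \<or> card \<beta> = 24 \<or> card \<beta> = 32 \<or> card \<beta> = 48"
    and C: "C_sub \<beta> = image \<sigma> ` target_code (card \<beta>)"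
    using C_sub_structure[OF assms] by metis
  have "dual_code {..<card \<beta>} (H8_sum (card \<beta> div 8)) = H8_sum (card \<beta> div 8)"
    using m dual_code_H8_sum[of "card \<beta> div 8"] by (elim disjE) simp_all
  from self_dual_code_image[OF \<sigma> this H8_sum_subset_target_code[OF m]] show ?thesis
    unfolding C by blast
qed

lemma C_sub_full:
  assumes "\<beta> \<in> D_code" "card \<beta> = 48"
  shows "C_sub \<beta> = C_code"
proof -
  have "\<beta> = {..<48}"
    using assms D_code_subset by (intro card_subset_eq) auto
  then show ?thesis
    using dual_code_subset by (auto simp: C_sub_def C_code_def)
qed

theorem proposition6:
  "\<forall>\<beta>\<in>D_code.
     (card \<beta> = 16 \<longrightarrow> code_iso \<beta> (C_sub \<beta>) {..<16} (RM 2 4)) \<and>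
     (card \<beta> = 24 \<longrightarrow> code_iso \<beta> (C_sub \<beta>) {..<24} Code24) \<and>
     (card \<beta> = 32 \<longrightarrow> code_iso \<beta> (C_sub \<beta>) {..<32} (RM 3 5)) \<and>
     (card \<beta> = 48 \<longrightarrow> C_sub \<beta> = C_code) \<and>
     (\<beta> \<noteq> {} \<longrightarrow> (\<exists>S. S \<subseteq> C_sub \<beta> \<and> S = dual_code \<beta> S \<and>
                        code_iso \<beta> S {..<card \<beta>} (H8_sum (card \<beta> div 8))))"
proof (intro ballI conjI impI)
  fix \<beta> assume \<beta>: "\<beta> \<in> D_code"
  have iso: "code_iso \<beta> (C_sub \<beta>) {..<card \<beta>} (target_code (card \<beta>))" if "card \<beta> \<noteq> 0"
    using \<beta> that by (intro C_sub_iso_target_code) auto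
  show "code_iso \<beta> (C_sub \<beta>) {..<16} (RM 2 4)" if "card \<beta> = 16"
    using iso that by (simp add: RM_2_4_eq_target_code)
  show "code_iso \<beta> (C_sub \<beta>) {..<24} Code24" if "card \<beta> = 24"
    using iso that by (simp add: Code24_eq_target_code)
  show "code_iso \<beta> (C_sub \<beta>) {..<32} (RM 3 5)" if "card \<beta> = 32"
    using iso that by (simp add: RM_3_5_eq_target_code)
  show "C_sub \<beta> = C_code" if "card \<beta> = 48"
    using \<beta> that by (rule C_sub_full)
  show "\<exists>S. S \<subseteq> C_sub \<beta> \<and> S = dual_code \<beta> S \<and>
      code_iso \<beta> S {..<card \<beta>} (H8_sum (card \<beta> div 8))" if "\<beta> \<noteq> {}"
    using \<beta> that by (rule C_sub_self_dual_subcode)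
qed

end
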